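(* Let $X$ be an $n$-dimensional normed space over $\mathbb{K}\in\{\mathbb{R},\mathbb{C}\}$ and let $Y \subseteq X$ be a subspace of dimension $n-1$ satisfying $\lambda(Y, X)>1$. Let $T=\sum_{i=1}^{l}\alpha_i x_i \otimes f_i$ be a Chalmers–Metcalf operator for $Y$. If there is no non-zero $y \in Y$ with $f_i(y)=0$ for all $1 \leq i \leq l$, then the minimal projection $P: X \to Y$ is unique. In particular, the minimal projection is unique if the restriction $T|_Y:Y \to Y$ is invertible.
   Context: A projection onto $Y$ is a linear $P:X\to Y$ with $P|_Y=\mathrm{id}_Y$; $\lambda(Y,X)$ is the infimum of their operator norms and a minimal projection is one of norm $\lambda(Y,X)$. For $x\in X$, $f\in X^*$, $x\otimes f$ is the operator $z\mapsto f(z)x$. A Chalmers–Metcalf operator for $Y$ is an operator $T=\sum_{i=1}^{l}\alpha_i x_i\otimes f_i:X\to X$ with $(x_i,f_i)\in\mathrm{ext}\,B_X\times\mathrm{ext}\,B_{X^*}$, $\alpha_i>0$, $\sum_i\alpha_i=1$, $T(Y)\subseteq Y$, and $f_i(P_0(x_i))=\|P_0\|=\lambda(Y,X)$ for all $i$ and some fixed minimal projection $P_0:X\to Y$. *)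

theory Defs
  imports "HOL-Analysis.Analysis"
begin

text \<open>The scalar field K is a type 'k of class real_normed_field that is (as an
R-algebra) either R or C. A normed space over K is a real normed vector space 'v
with a K-scalar multiplication sc that extends the real one and is norm-homogeneous.\<close>

definition real_or_complex_field :: "'k::real_normed_field itself \<Rightarrow> bool" where
  "real_or_complex_field TYPE('k) \<longleftrightarrow>
     (\<forall>c::'k. \<exists>r. c = of_real r) \<or>
     (\<exists>j::'k. j * j = - 1 \<and> (\<forall>c::'k. \<exists>a b. c = of_real a + of_real b * j))"

definition K_normed_space :: "('k::real_normed_field \<Rightarrow> 'v::real_normed_vector \<Rightarrow> 'v) \<Rightarrow> bool" where
  "K_normed_space sc \<longleftrightarrow> vector_space sc \<and>
     (\<forall>r x. sc (of_real r) x = r *\<^sub>R x) \<and>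
     (\<forall>c x. norm (sc c x) = norm c * norm x)"

definition is_projection :: "('k::real_normed_field \<Rightarrow> 'v::real_normed_vector \<Rightarrow> 'v) \<Rightarrow> 'v set \<Rightarrow> ('v \<Rightarrow> 'v) \<Rightarrow> bool" where
  "is_projection sc Y P \<longleftrightarrow> Vector_Spaces.linear sc sc P \<and> range P \<subseteq> Y \<and> (\<forall>y\<in>Y. P y = y)"

definition proj_const :: "('k::real_normed_field \<Rightarrow> 'v::real_normed_vector \<Rightarrow> 'v) \<Rightarrow> 'v set \<Rightarrow> real" where
  "proj_const sc Y = Inf (onorm ` {P. is_projection sc Y P})"

definition minimal_projection :: "('k::real_normed_field \<Rightarrow> 'v::real_normed_vector \<Rightarrow> 'v) \<Rightarrow> 'v set \<Rightarrow> ('v \<Rightarrow> 'v) \<Rightarrow> bool" where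
  "minimal_projection sc Y P \<longleftrightarrow> is_projection sc Y P \<and> onorm P = proj_const sc Y"

text \<open>Extreme points of the unit ball of X and of the unit ball of the dual X*
(the dual ball = K-linear functionals of operator norm at most 1; extreme points are
taken with respect to real convex combinations, as usual).\<close>

definition ext_ball :: "'v::real_normed_vector \<Rightarrow> bool" where
  "ext_ball x \<longleftrightarrow> x extreme_point_of cball 0 1"

definition dual_ball :: "('k::real_normed_field \<Rightarrow> 'v::real_normed_vector \<Rightarrow> 'v) \<Rightarrow> ('v \<Rightarrow> 'k) set" where
  "dual_ball sc = {f. Vector_Spaces.linear sc (*) f \<and> onorm f \<le> 1}"

definition ext_dual_ball :: "('k::real_normed_field \<Rightarrow> 'v::real_normed_vector \<Rightarrow> 'v) \<Rightarrow> ('v \<Rightarrow> 'k) \<Rightarrow> bool" where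
  "ext_dual_ball sc f \<longleftrightarrow> f \<in> dual_ball sc \<and>
     (\<forall>g\<in>dual_ball sc. \<forall>h\<in>dual_ball sc. \<forall>t::real. 0 < t \<and> t < 1 \<and>
        f = (\<lambda>z. of_real t * g z + of_real (1 - t) * h z) \<longrightarrow> g = h)"

text \<open>The operator sum_{i<l} alpha_i x_i \<otimes> f_i, where (x \<otimes> f)(z) = f(z) x.\<close>

definition CM_op :: "('k::real_normed_field \<Rightarrow> 'v::real_normed_vector \<Rightarrow> 'v) \<Rightarrow> nat \<Rightarrow> (nat \<Rightarrow> real) \<Rightarrow> (nat \<Rightarrow> 'v) \<Rightarrow> (nat \<Rightarrow> 'v \<Rightarrow> 'k) \<Rightarrow> 'v \<Rightarrow> 'v" where
  "CM_op sc l \<alpha> x f = (\<lambda>z. \<Sum>i<l. sc (of_real (\<alpha> i) * f i z) (x i))"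

definition Chalmers_Metcalf :: "('k::real_normed_field \<Rightarrow> 'v::real_normed_vector \<Rightarrow> 'v) \<Rightarrow> 'v set \<Rightarrow> nat \<Rightarrow> (nat \<Rightarrow> real) \<Rightarrow> (nat \<Rightarrow> 'v) \<Rightarrow> (nat \<Rightarrow> 'v \<Rightarrow> 'k) \<Rightarrow> bool" where
  "Chalmers_Metcalf sc Y l \<alpha> x f \<longleftrightarrow>
     (\<forall>i<l. ext_ball (x i) \<and> ext_dual_ball sc (f i) \<and> \<alpha> i > 0) \<and>
     (\<Sum>i<l. \<alpha> i) = 1 \<and>
     CM_op sc l \<alpha> x f ` Y \<subseteq> Y \<and>
     (\<exists>P0. minimal_projection sc Y P0 \<and>
        (\<forall>i<l. f i (P0 (x i)) = of_real (onorm P0) \<and> onorm P0 = proj_const sc Y))"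

end

theory Submission
  imports Defs
begin

text \<open>Two projections \<open>P\<close>, \<open>Q\<close> onto the hyperplane \<open>Y\<close> differ by a rank-one map
\<open>P - Q = y0 \<otimes> \<phi>\<close>, where \<open>y0 \<in> Y\<close> and \<open>\<phi>\<close> is a linear functional with kernel \<open>Y\<close>.
As \<open>T\<close> leaves \<open>Y = ker \<phi>\<close> invariant, \<open>\<Sum>i. \<alpha>\<^sub>i f\<^sub>i ((P - Q) x\<^sub>i) = \<phi> (T y0) = 0\<close>, so the weighted sum
\<open>\<Sum>i. \<alpha>\<^sub>i f\<^sub>i (P x\<^sub>i)\<close> does not depend on the projection and equals \<open>\<lambda>(Y, X)\<close>, its value for
the minimal projection \<open>P\<^sub>0\<close> attached to \<open>T\<close>. If \<open>P\<close> is minimal too, every term has modulus at most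
\<open>\<lambda>(Y, X)\<close>, and since the unit disc of \<open>\<real>\<close> or \<open>\<complex>\<close> is strictly convex at real points,
\<open>f\<^sub>i (P x\<^sub>i) = \<lambda>(Y, X) = f\<^sub>i (P\<^sub>0 x\<^sub>i)\<close> for every \<open>i\<close>, i.e. \<open>\<phi> (x\<^sub>i) f\<^sub>i (y0) = 0\<close>. The hypothesis
\<open>\<lambda>(Y, X) > 1\<close> forces \<open>x\<^sub>i \<notin> Y\<close>, so \<open>\<phi> (x\<^sub>i) \<noteq> 0\<close>; hence \<open>y0\<close> is a common zero of the \<open>f\<^sub>i\<close> in \<open>Y\<close>,
so \<open>y0 = 0\<close> and \<open>P = P\<^sub>0\<close>. A common zero \<open>y \<noteq> 0\<close> would also satisfy \<open>T y = 0\<close>, which rules it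
out when \<open>T\<close> is injective on \<open>Y\<close>.\<close>

section \<open>Linear maps on finite-dimensional normed spaces\<close>

lemma independent_norm_bound_on_l1_sphere:
  fixes C :: "'a::real_normed_vector set"
  assumes "finite C" and "independent C"
  obtains \<mu> where "\<mu> > 0" and "\<And>c. (\<Sum>b\<in>C. \<bar>c b\<bar>) = 1 \<Longrightarrow> \<mu> \<le> norm (\<Sum>b\<in>C. c b *\<^sub>R b)"
proof -
  define S where
    "S = Pi\<^sub>E UNIV (\<lambda>b. if b \<in> C then cball (0::real) 1 else {0}) \<inter> {c. (\<Sum>b\<in>C. \<bar>c b\<bar>) = 1}"
  have "compactin (product_topology (\<lambda>b. euclidean) UNIV)
      (Pi\<^sub>E UNIV (\<lambda>b. if b \<in> C then cball (0::real) 1 else {0}))"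
    by (subst compactin_PiE) auto
  moreover have "closed {c::'a \<Rightarrow> real. (\<Sum>b\<in>C. \<bar>c b\<bar>) = 1}"
    by (intro closed_Collect_eq continuous_intros continuous_on_product_coordinates)
  ultimately have "compact S"
    unfolding S_def by (intro compact_Int_closed) (simp_all add: euclidean_product_topology)
  have restrict: "(\<lambda>b. if b \<in> C then c b else 0) \<in> S" if "(\<Sum>b\<in>C. \<bar>c b\<bar>) = 1" for c
  proof -
    have "\<bar>c b\<bar> \<le> 1" if "b \<in> C" for b
      using \<open>finite C\<close> \<open>b \<in> C\<close> \<open>(\<Sum>b\<in>C. \<bar>c b\<bar>) = 1\<close> member_le_sum[of b C "\<lambda>b. \<bar>c b\<bar>"] by simp
    then show ?thesis using that unfolding S_def by (auto simp: PiE_iff cong: sum.cong)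
  qed
  show thesis
  proof (cases "S = {}")
    case True
    then show thesis using restrict by (intro that[of 1]) auto
  next
    case False
    have "continuous_on S (\<lambda>c. norm (\<Sum>b\<in>C. c b *\<^sub>R b))"
      by (intro continuous_intros continuous_on_subset[OF continuous_on_product_coordinates]) auto
    then obtain c0 where "c0 \<in> S" and c0_min: "\<And>c. c \<in> S \<Longrightarrow> norm (\<Sum>b\<in>C. c0 b *\<^sub>R b) \<le> norm (\<Sum>b\<in>C. c b *\<^sub>R b)"
      using continuous_attains_inf[OF \<open>compact S\<close> False] by blast
    have "(\<Sum>b\<in>C. c0 b *\<^sub>R b) \<noteq> 0"
    proof
      assume "(\<Sum>b\<in>C. c0 b *\<^sub>R b) = 0"
      then have "\<forall>b\<in>C. c0 b = 0" using assms real_vector.dependent_finite by blast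
      then show False using \<open>c0 \<in> S\<close> unfolding S_def by simp
    qed
    moreover have "norm (\<Sum>b\<in>C. c0 b *\<^sub>R b) \<le> norm (\<Sum>b\<in>C. c b *\<^sub>R b)"
      if "(\<Sum>b\<in>C. \<bar>c b\<bar>) = 1" for c
      using c0_min[OF restrict[OF that]] by (simp cong: sum.cong)
    ultimately show thesis by (intro that[of "norm (\<Sum>b\<in>C. c0 b *\<^sub>R b)"]) auto
  qed
qed

lemma independent_coefficients_bound:
  fixes C :: "'a::real_normed_vector set"
  assumes "finite C" and "independent C"
  obtains \<mu> where "\<mu> > 0" and "\<And>u. \<mu> * (\<Sum>b\<in>C. \<bar>u b\<bar>) \<le> norm (\<Sum>b\<in>C. u b *\<^sub>R b)"
proof -
  obtain \<mu> where "\<mu> > 0" and \<mu>_le: "\<And>c. (\<Sum>b\<in>C. \<bar>c b\<bar>) = 1 \<Longrightarrow> \<mu> \<le> norm (\<Sum>b\<in>C. c b *\<^sub>R b)"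
    using independent_norm_bound_on_l1_sphere[OF assms] by blast
  have "\<mu> * s \<le> norm (\<Sum>b\<in>C. u b *\<^sub>R b)" if "s = (\<Sum>b\<in>C. \<bar>u b\<bar>)" for u s
  proof (cases "s = 0")
    case False
    then have "s > 0" using that by (simp add: sum_nonneg order_le_neq_trans)
    then have "(\<Sum>b\<in>C. \<bar>u b / s\<bar>) = 1" using that by (simp add: sum_divide_distrib[symmetric])
    then have "\<mu> \<le> norm (\<Sum>b\<in>C. (u b / s) *\<^sub>R b)" by (rule \<mu>_le)
    also have "(\<Sum>b\<in>C. (u b / s) *\<^sub>R b) = (1 / s) *\<^sub>R (\<Sum>b\<in>C. u b *\<^sub>R b)"
      by (simp add: scaleR_sum_right)
    also have "norm \<dots> = norm (\<Sum>b\<in>C. u b *\<^sub>R b) / s" using \<open>s > 0\<close> by simp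
    finally show ?thesis using \<open>s > 0\<close> by (simp add: field_simps)
  qed simp
  then show thesis using that \<open>\<mu> > 0\<close> by blast
qed

lemma bounded_linear_if_finite_span:
  fixes g :: "'a::real_normed_vector \<Rightarrow> 'b::real_normed_vector" and B :: "'a set"
  assumes "finite B" and "span B = UNIV" and "linear g"
  shows "bounded_linear g"
proof -
  obtain C where "C \<subseteq> B" and "independent C" and "B \<subseteq> span C"
    by (rule real_vector.maximal_independent_subset)
  then have "finite C" and "span C = UNIV"
    using \<open>finite B\<close> \<open>span B = UNIV\<close> real_vector.span_minimal[of B "span C"]
    by (auto intro: finite_subset)
  obtain \<mu> where "\<mu> > 0" and \<mu>_le: "\<And>u. \<mu> * (\<Sum>b\<in>C. \<bar>u b\<bar>) \<le> norm (\<Sum>b\<in>C. u b *\<^sub>R b)"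
    using independent_coefficients_bound[OF \<open>finite C\<close> \<open>independent C\<close>] by blast
  define M where "M = (\<Sum>b\<in>C. norm (g b))"
  show ?thesis
  proof (rule bounded_linear_intro[where K = "M / \<mu>"])
    fix z
    obtain u where z: "z = (\<Sum>b\<in>C. u b *\<^sub>R b)"
      using real_vector.span_finite[OF \<open>finite C\<close>] \<open>span C = UNIV\<close> by auto
    have "norm (g z) = norm (\<Sum>b\<in>C. u b *\<^sub>R g b)"
      unfolding z using \<open>linear g\<close> by (simp add: linear_sum linear_scale)
    also have "\<dots> \<le> (\<Sum>b\<in>C. \<bar>u b\<bar> * norm (g b))"
      by (rule order_trans[OF norm_sum]) simp
    also have "\<dots> \<le> (\<Sum>b\<in>C. \<bar>u b\<bar>) * M"
      unfolding M_def sum_distrib_right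
      by (intro sum_mono mult_left_mono) (auto intro: member_le_sum \<open>finite C\<close>)
    also have "\<dots> \<le> norm z / \<mu> * M"
      using \<mu>_le[of u] \<open>\<mu> > 0\<close> unfolding z
      by (intro mult_right_mono) (auto simp: field_simps M_def sum_nonneg)
    finally show "norm (g z) \<le> norm z * (M / \<mu>)" by simp
  qed (use \<open>linear g\<close> in \<open>auto simp: linear_add linear_scale\<close>)
qed

section \<open>The scalar field\<close>

lemma norm_le_1_if_powers_bounded:
  fixes z :: "'a::real_normed_div_algebra"
  assumes "\<And>k. norm (z ^ k) \<le> C"
  shows "norm z \<le> 1"
proof (rule ccontr)
  assume "\<not> norm z \<le> 1"
  then obtain k where "C < norm z ^ k" using real_arch_pow by force
  then show False using assms[of k] by (simp add: norm_power)
qed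

lemma mult_of_real_add_mult_imag:
  fixes j :: "'k::real_normed_field"
  assumes "j * j = -1"
  shows "(of_real a + of_real b * j) * (of_real c + of_real d * j)
    = of_real (a * c - b * d) + of_real (a * d + b * c) * (j :: 'k)"
proof -
  have "(of_real a + of_real b * j) * (of_real c + of_real d * j)
    = of_real (a * c) + of_real (b * d) * (j * j) + of_real (a * d + b * c) * (j :: 'k)"
    by (simp add: algebra_simps)
  then show ?thesis using assms by simp
qed

lemma norm_imag_unit:
  fixes j :: "'k::real_normed_field"
  assumes "j * j = -1"
  shows "norm j = 1"
proof -
  have "norm j * norm j = 1" using assms by (metis norm_minus_cancel norm_mult norm_one)
  then show ?thesis by (metis abs_norm_cancel abs_square_eq_1 power2_eq_square)
qed

lemma norm_of_real_add_mult_imag_le_1: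
  fixes j :: "'k::real_normed_field"
  assumes j: "j * j = -1" and "a\<^sup>2 + b\<^sup>2 = 1"
  shows "norm (of_real a + of_real b * j) \<le> 1"
proof (rule norm_le_1_if_powers_bounded)
  fix k
  have "\<exists>c d. (of_real a + of_real b * j) ^ k = of_real c + of_real d * j \<and> c\<^sup>2 + d\<^sup>2 = 1"
  proof (induction k)
    case 0
    show ?case by (intro exI[of _ 1] exI[of _ 0]) simp
  next
    case (Suc k)
    then obtain c d where cd: "(of_real a + of_real b * j) ^ k = of_real c + of_real d * j"
      and "c\<^sup>2 + d\<^sup>2 = 1" by blast
    have "(of_real a + of_real b * j) ^ Suc k = of_real (c * a - d * b) + of_real (c * b + d * a) * j"
      by (simp only: power_Suc2 cd mult_of_real_add_mult_imag[OF j])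
    moreover have "(c * a - d * b)\<^sup>2 + (c * b + d * a)\<^sup>2 = (c\<^sup>2 + d\<^sup>2) * (a\<^sup>2 + b\<^sup>2)"
      by (simp add: power2_eq_square algebra_simps)
    then have "(c * a - d * b)\<^sup>2 + (c * b + d * a)\<^sup>2 = 1"
      using \<open>c\<^sup>2 + d\<^sup>2 = 1\<close> assms(2) by simp
    ultimately show ?case by blast
  qed
  then obtain c d where cd: "(of_real a + of_real b * j) ^ k = of_real c + of_real d * j"
    and "c\<^sup>2 + d\<^sup>2 = 1" by blast
  then have "c\<^sup>2 \<le> 1" and "d\<^sup>2 \<le> 1"
    using zero_le_power2[of c] zero_le_power2[of d] by linarith+
  then have "\<bar>c\<bar> \<le> 1" and "\<bar>d\<bar> \<le> 1" by (simp_all add: abs_square_le_1)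
  have "norm ((of_real a + of_real b * j) ^ k) \<le> norm (of_real c :: 'k) + norm (of_real d * j)"
    unfolding cd by (rule norm_triangle_ineq)
  also have "\<dots> \<le> 2"
    using \<open>\<bar>c\<bar> \<le> 1\<close> \<open>\<bar>d\<bar> \<le> 1\<close> by (simp add: norm_mult norm_imag_unit[OF j])
  finally show "norm ((of_real a + of_real b * j) ^ k) \<le> 2" .
qed

lemma norm_of_real_add_mult_imag_le:
  fixes j :: "'k::real_normed_field"
  assumes "j * j = -1"
  shows "norm (of_real a + of_real b * j) \<le> sqrt (a\<^sup>2 + b\<^sup>2)"
proof (cases "a\<^sup>2 + b\<^sup>2 = 0")
  case False
  define r where "r = sqrt (a\<^sup>2 + b\<^sup>2)"
  have "a\<^sup>2 + b\<^sup>2 > 0" using False by (metis add_nonneg_nonneg order_le_less zero_le_power2)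
  then have "r > 0" unfolding r_def by simp
  have "(a / r)\<^sup>2 + (b / r)\<^sup>2 = 1"
    using False by (simp add: r_def power_divide add_divide_distrib[symmetric])
  then have "norm (of_real (a / r) + of_real (b / r) * j) \<le> 1"
    by (rule norm_of_real_add_mult_imag_le_1[OF assms])
  moreover have "of_real r * (of_real (a / r) + of_real (b / r) * j)
    = of_real (r * (a / r)) + of_real (r * (b / r)) * j"
    by (simp only: distrib_left of_real_mult mult.assoc)
  then have "of_real a + of_real b * j = of_real r * (of_real (a / r) + of_real (b / r) * j)"
    using \<open>r > 0\<close> by simp
  ultimately show ?thesis
    using \<open>r > 0\<close> by (simp add: norm_mult r_def mult_le_cancel_left1)
qed simp

text \<open>Both \<open>a + bj\<close> and \<open>a - bj\<close> have norm at most \<open>r = sqrt (a\<^sup>2 + b\<^sup>2)\<close>, while their product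
is \<open>r\<^sup>2\<close>.\<close>

lemma norm_of_real_add_mult_imag:
  fixes j :: "'k::real_normed_field"
  assumes j: "j * j = -1"
  shows "norm (of_real a + of_real b * j) = sqrt (a\<^sup>2 + b\<^sup>2)"
proof -
  define r where "r = sqrt (a\<^sup>2 + b\<^sup>2)"
  have le: "norm (of_real a + of_real b * j) \<le> r" "norm (of_real a + of_real (- b) * j) \<le> r"
    unfolding r_def
    using norm_of_real_add_mult_imag_le[OF j, of a b] norm_of_real_add_mult_imag_le[OF j, of a "- b"]
    by simp_all
  have "(of_real a + of_real b * j) * (of_real a + of_real (- b) * j) = (of_real (r * r) :: 'k)"
    using mult_of_real_add_mult_imag[OF j, of a b a "- b"]
    by (simp add: r_def power2_eq_square)
  moreover have "norm (of_real (r * r) :: 'k) = r * r" by (simp only: norm_of_real) (simp add: abs_mult)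
  ultimately have prod: "norm (of_real a + of_real b * j) * norm (of_real a + of_real (- b) * j) = r * r"
    by (metis norm_mult)
  show ?thesis
    unfolding r_def[symmetric]
  proof (rule ccontr)
    assume "norm (of_real a + of_real b * j) \<noteq> r"
    then have less: "norm (of_real a + of_real b * j) < r" using le(1) by simp
    have "norm (of_real a + of_real b * j) * norm (of_real a + of_real (- b) * j)
      \<le> norm (of_real a + of_real b * j) * r"
      by (intro mult_left_mono le(2) norm_ge_zero)
    also have "\<dots> < r * r"
      using less by (intro mult_strict_right_mono) (auto intro: le_less_trans[OF norm_ge_zero])
    finally show False using prod by simp
  qed
qed

text \<open>Polarisation: the real part, written without a conjugation so that it makes sense in every
real normed field.\<close>

definition re_part :: "'k::real_normed_field \<Rightarrow> real" where
  "re_part c = ((norm (1 + c))\<^sup>2 - (norm (1 - c))\<^sup>2) / 4"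

lemma re_part_of_real [simp]: "re_part (of_real r :: 'k::real_normed_field) = r"
proof -
  have plus: "1 + of_real r = (of_real (1 + r) :: 'k)" and minus: "1 - of_real r = (of_real (1 - r) :: 'k)"
    by simp_all
  show ?thesis
    unfolding re_part_def plus minus norm_of_real by (simp add: power2_sum power2_diff)
qed

lemma re_part_of_real_add_mult_imag:
  fixes j :: "'k::real_normed_field"
  assumes "j * j = -1"
  shows "re_part (of_real a + of_real b * j) = a"
proof -
  have plus: "1 + (of_real a + of_real b * j) = of_real (1 + a) + of_real b * j"
    and minus: "1 - (of_real a + of_real b * j) = of_real (1 - a) + of_real (- b) * j"
    by (simp_all add: algebra_simps)
  have "0 \<le> (1 + a)\<^sup>2 + b\<^sup>2" and "0 \<le> (1 - a)\<^sup>2 + (- b)\<^sup>2" by simp_all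
  then show ?thesis
    unfolding re_part_def plus minus norm_of_real_add_mult_imag[OF assms]
    by (simp only: real_sqrt_pow2) (simp add: power2_sum power2_diff)
qed

text \<open>In the real case the coordinates below hold with \<open>j = 0\<close>, which is why the
upper bound on the norm is phrased as \<open>of_real b * j = 0\<close> rather than \<open>b = 0\<close>.\<close>

lemma real_or_complex_field_coordinates:
  assumes "real_or_complex_field TYPE('k)"
  obtains j :: "'k::real_normed_field" where "\<And>c. \<exists>a b. c = of_real a + of_real b * j"
    and "\<And>a b. re_part (of_real a + of_real b * j) = a"
    and "\<And>a b. \<bar>a\<bar> \<le> norm (of_real a + of_real b * j)"
    and "\<And>a b. norm (of_real a + of_real b * j) \<le> a \<Longrightarrow> of_real b * j = 0"
  using assms unfolding real_or_complex_field_def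
proof (elim disjE exE conjE)
  assume "\<forall>c::'k. \<exists>r. c = of_real r"
  then show thesis by (intro that[of 0]) auto
next
  fix j :: 'k
  assume j: "j * j = -1" and "\<forall>c. \<exists>a b. c = of_real a + of_real b * j"
  moreover have "b = 0" if "norm (of_real a + of_real b * j) \<le> a" for a b
  proof -
    have "sqrt (a\<^sup>2 + b\<^sup>2) \<le> a" using that by (simp only: norm_of_real_add_mult_imag[OF j])
    then have "b\<^sup>2 \<le> 0" by (auto dest: sqrt_le_D)
    then show "b = 0" by simp
  qed
  ultimately show thesis
    by (intro that[of j]) (auto simp: re_part_of_real_add_mult_imag norm_of_real_add_mult_imag)
qed

lemma linear_re_part:
  assumes "real_or_complex_field TYPE('k::real_normed_field)"
  shows "linear (re_part :: 'k \<Rightarrow> real)"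
proof -
  obtain j :: 'k where coords: "\<And>c. \<exists>a b. c = of_real a + of_real b * j"
    and re: "\<And>a b. re_part (of_real a + of_real b * j) = a"
    using real_or_complex_field_coordinates[OF assms] by metis
  show ?thesis
  proof (rule linearI)
    fix c d :: 'k
    obtain a b a' b' where c: "c = of_real a + of_real b * j" and d: "d = of_real a' + of_real b' * j"
      using coords by metis
    have "c + d = of_real (a + a') + of_real (b + b') * j" unfolding c d by (simp add: algebra_simps)
    then show "re_part (c + d) = re_part c + re_part d" unfolding c d re by (simp only: re)
  next
    fix r and c :: 'k
    obtain a b where c: "c = of_real a + of_real b * j" using coords by metis
    have "r *\<^sub>R c = of_real (r * a) + of_real (r * b) * j"
      unfolding c by (simp add: scaleR_conv_of_real algebra_simps)
    then show "re_part (r *\<^sub>R c) = r *\<^sub>R re_part c" unfolding c re by (simp only: re) simp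
  qed
qed

lemma re_part_le_norm:
  assumes "real_or_complex_field TYPE('k::real_normed_field)"
  shows "re_part (c :: 'k) \<le> norm c"
proof -
  obtain j :: 'k where "\<And>c. \<exists>a b. c = of_real a + of_real b * j"
    and "\<And>a b. re_part (of_real a + of_real b * j) = a"
    and "\<And>a b. \<bar>a\<bar> \<le> norm (of_real a + of_real b * j)"
    using real_or_complex_field_coordinates[OF assms] by metis
  then show ?thesis by (metis abs_ge_self order_trans)
qed

lemma eq_of_real_re_part_if_norm_le:
  assumes "real_or_complex_field TYPE('k::real_normed_field)" and "norm (c :: 'k) \<le> re_part c"
  shows "c = of_real (re_part c)"
proof -
  obtain j :: 'k where "\<And>c. \<exists>a b. c = of_real a + of_real b * j"
    and re: "\<And>a b. re_part (of_real a + of_real b * j) = a"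
    and "\<And>a b. norm (of_real a + of_real b * j) \<le> a \<Longrightarrow> of_real b * j = 0"
    using real_or_complex_field_coordinates[OF assms(1)] by metis
  then show ?thesis using assms(2) by (metis add.right_neutral)
qed

lemma convex_combination_eq_of_real_if_norm_le:
  fixes a :: "'i \<Rightarrow> 'k::real_normed_field"
  assumes K: "real_or_complex_field TYPE('k)" and "finite I"
    and pos: "\<And>i. i \<in> I \<Longrightarrow> 0 < \<alpha> i" and "(\<Sum>i\<in>I. \<alpha> i) = 1"
    and le: "\<And>i. i \<in> I \<Longrightarrow> norm (a i) \<le> r"
    and eq: "(\<Sum>i\<in>I. of_real (\<alpha> i) * a i) = of_real r"
    and "i \<in> I"
  shows "a i = of_real r"
proof -
  have "re_part (\<Sum>i\<in>I. of_real (\<alpha> i) * a i) = (\<Sum>i\<in>I. \<alpha> i * re_part (a i))"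
    unfolding scaleR_conv_of_real[symmetric]
    by (simp add: linear_sum[OF linear_re_part[OF K]] linear_scale[OF linear_re_part[OF K]])
  then have "(\<Sum>i\<in>I. \<alpha> i * re_part (a i)) = r" unfolding eq re_part_of_real by simp
  then have "(\<Sum>i\<in>I. \<alpha> i * (r - re_part (a i))) = 0"
    using \<open>(\<Sum>i\<in>I. \<alpha> i) = 1\<close>
    by (simp add: right_diff_distrib sum_subtractf flip: sum_distrib_right)
  moreover have nonneg: "0 \<le> \<alpha> i * (r - re_part (a i))" if "i \<in> I" for i
    using pos[OF that] le[OF that] re_part_le_norm[OF K, of "a i"] by simp
  ultimately have "\<forall>i\<in>I. \<alpha> i * (r - re_part (a i)) = 0"
    by (simp add: sum_nonneg_eq_0_iff[OF \<open>finite I\<close>])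
  then have "\<alpha> i * (r - re_part (a i)) = 0" using \<open>i \<in> I\<close> by blast
  then have "re_part (a i) = r" using pos[OF \<open>i \<in> I\<close>] by simp
  then show ?thesis
    using eq_of_real_re_part_if_norm_le[OF K] le[OF \<open>i \<in> I\<close>] by metis
qed

section \<open>Normed spaces over the scalar field\<close>

lemma linear_if_K_linear:
  assumes "\<And>r x. sc (of_real r) x = r *\<^sub>R x" and "\<And>r y. sc' (of_real r) y = r *\<^sub>R y"
    and "Vector_Spaces.linear sc sc' g"
  shows "linear g"
proof (rule linearI)
  show "g (x + y) = g x + g y" for x y
    using assms(3) by (simp add: Vector_Spaces.linear_iff)
  show "g (r *\<^sub>R x) = r *\<^sub>R g x" for r x
    using assms(3) by (simp add: Vector_Spaces.linear_iff flip: assms(1,2))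
qed

lemma Chalmers_Metcalf_functional_linear:
  assumes "Chalmers_Metcalf sc Y l \<alpha> x f" and "i < l"
  shows "Vector_Spaces.linear sc (*) (f i)"
  using assms unfolding Chalmers_Metcalf_def ext_dual_ball_def dual_ball_def by blast

locale finite_dim_K_normed_space =
  fixes sc :: "'k::real_normed_field \<Rightarrow> 'v::real_normed_vector \<Rightarrow> 'v"
  assumes real_or_complex: "real_or_complex_field TYPE('k)"
    and K_normed: "K_normed_space sc"
    and finite_span: "\<exists>B. finite B \<and> module.span sc B = UNIV"
begin

sublocale vector_space sc
  using K_normed unfolding K_normed_space_def by blast

lemma scale_of_real: "sc (of_real r) z = r *\<^sub>R z"
  using K_normed unfolding K_normed_space_def by blast

lemma finite_real_span: "\<exists>B :: 'v set. finite B \<and> real_vector.span B = UNIV"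
proof -
  obtain B where "finite B" and "span B = UNIV" using finite_span by blast
  obtain j :: 'k where coords: "\<And>c. \<exists>a b. c = of_real a + of_real b * j"
    using real_or_complex_field_coordinates[OF real_or_complex] by metis
  have scale_in_span: "sc c v \<in> real_vector.span (B \<union> sc j ` B)" if "v \<in> B" for c v
  proof -
    obtain a b where "c = of_real a + of_real b * j" using coords by blast
    then have "sc c v = a *\<^sub>R v + b *\<^sub>R sc j v"
      by (simp add: scale_left_distrib scale_of_real flip: scale_scale)
    also have "\<dots> \<in> real_vector.span (B \<union> sc j ` B)"
      using that by (intro real_vector.span_add real_vector.span_scale real_vector.span_base) auto
    finally show ?thesis .
  qed
  have "z \<in> real_vector.span (B \<union> sc j ` B)" for z
  proof -
    obtain u where "z = (\<Sum>v\<in>B. sc (u v) v)"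
      using span_finite[OF \<open>finite B\<close>] \<open>span B = UNIV\<close> by auto
    then show ?thesis by (auto intro: real_vector.span_sum scale_in_span)
  qed
  then show ?thesis using \<open>finite B\<close> by (intro exI[of _ "B \<union> sc j ` B"]) auto
qed

text \<open>For an unbounded map \<open>onorm\<close> is a junk value; finite dimension is what makes the operator
norms in \<open>proj_const\<close> and \<open>dual_ball\<close> meaningful.\<close>

lemma bounded_linear_if_K_linear:
  assumes "\<And>r y. sc' (of_real r) y = r *\<^sub>R y" and "Vector_Spaces.linear sc sc' g"
  shows "bounded_linear g"
  using finite_real_span linear_if_K_linear[OF scale_of_real assms] bounded_linear_if_finite_span
  by blast

lemma norm_le_if_dual_ball:
  assumes "f \<in> dual_ball sc"
  shows "norm (f z) \<le> norm z"
proof -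
  have "bounded_linear f"
    using assms unfolding dual_ball_def
    by (intro bounded_linear_if_K_linear[of "(*)"]) (auto simp: scaleR_conv_of_real)
  then have "norm (f z) \<le> onorm f * norm z" by (rule onorm)
  also have "\<dots> \<le> norm z"
    using assms mult_right_mono[of "onorm f" 1 "norm z"] unfolding dual_ball_def by simp
  finally show ?thesis .
qed

lemma bounded_linear_if_projection:
  assumes "is_projection sc Y P"
  shows "bounded_linear P"
  using assms unfolding is_projection_def by (auto intro: bounded_linear_if_K_linear scale_of_real)

lemma norm_le_if_minimal_projection:
  assumes "minimal_projection sc Y P"
  shows "norm (P z) \<le> proj_const sc Y * norm z"
  using onorm[OF bounded_linear_if_projection] assms unfolding minimal_projection_def by metis

lemma proj_const_nonneg:
  assumes "minimal_projection sc Y P"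
  shows "0 \<le> proj_const sc Y"
  using onorm_pos_le[OF bounded_linear_if_projection] assms unfolding minimal_projection_def by metis

lemma Chalmers_Metcalf_point_notin:
  assumes "Chalmers_Metcalf sc Y l \<alpha> x f" and "proj_const sc Y > 1" and "i < l"
  shows "x i \<notin> Y"
proof
  assume "x i \<in> Y"
  obtain P0 where "minimal_projection sc Y P0" and "f i (P0 (x i)) = of_real (proj_const sc Y)"
    using assms(1,3) unfolding Chalmers_Metcalf_def by metis
  then have "f i (x i) = of_real (proj_const sc Y)"
    using \<open>x i \<in> Y\<close> unfolding minimal_projection_def is_projection_def by simp
  moreover have "norm (f i (x i)) \<le> 1"
    using assms(1,3) norm_le_if_dual_ball[of "f i" "x i"]
    unfolding Chalmers_Metcalf_def ext_dual_ball_def ext_ball_def extreme_point_of_def by force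
  ultimately show False using assms(2) by simp
qed

lemma no_common_zero_if_inj_on_CM_op:
  assumes "inj_on (CM_op sc l \<alpha> x f) Y" and "0 \<in> Y"
    and "\<And>i. i < l \<Longrightarrow> Vector_Spaces.linear sc (*) (f i)"
  shows "\<not> (\<exists>y\<in>Y. y \<noteq> 0 \<and> (\<forall>i<l. f i y = 0))"
proof
  assume "\<exists>y\<in>Y. y \<noteq> 0 \<and> (\<forall>i<l. f i y = 0)"
  then obtain y where "y \<in> Y" and "y \<noteq> 0" and "\<forall>i<l. f i y = 0" by blast
  moreover have "f i 0 = 0" if "i < l" for i
    using assms(3)[OF that] unfolding Vector_Spaces.linear_iff by (metis add_cancel_right_right)
  ultimately have "CM_op sc l \<alpha> x f y = CM_op sc l \<alpha> x f 0" unfolding CM_op_def by simp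
  then show False using inj_onD[OF assms(1) _ \<open>y \<in> Y\<close> \<open>0 \<in> Y\<close>] \<open>y \<noteq> 0\<close> by blast
qed

end

section \<open>Projections onto a hyperplane\<close>

locale K_normed_hyperplane = finite_dim_K_normed_space sc
  for sc :: "'k::real_normed_field \<Rightarrow> 'v::real_normed_vector \<Rightarrow> 'v" +
  fixes Y :: "'v set"
  assumes subspace_Y: "module.subspace sc Y"
    and dim_Y: "vector_space.dim sc Y + 1 = vector_space.dim sc (UNIV :: 'v set)"
begin

lemma span_Y [simp]: "span Y = Y"
  using subspace_Y by simp

lemma span_insert_eq_UNIV:
  assumes "w \<notin> Y"
  shows "span (insert w Y) = UNIV"
proof -
  obtain B where "finite B" and "span B = UNIV" using finite_span by blast
  obtain C where "C \<subseteq> B" and "independent C" and "B \<subseteq> span C"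
    by (rule maximal_independent_subset)
  then have "finite C" and "span C = UNIV"
    using \<open>finite B\<close> \<open>span B = UNIV\<close> span_minimal[of B "span C"] by (auto intro: finite_subset)
  then interpret finite_dimensional_vector_space sc C
    using \<open>independent C\<close> by unfold_locales
  have "w \<notin> span Y" using assms by simp
  then have "dim (insert w Y) = dim UNIV" using dim_Y by (simp add: dim_insert)
  then show ?thesis using dim_eq_full by (simp add: dimension_def)
qed

lemma hyperplane_coordinate:
  obtains \<phi> w where "Vector_Spaces.linear sc (*) \<phi>"
    and "\<And>z. z - sc (\<phi> z) w \<in> Y" and "\<And>y. y \<in> Y \<Longrightarrow> \<phi> y = 0"
proof -
  have "Y \<noteq> UNIV" using dim_Y by auto
  then obtain w where "w \<notin> Y" by blast
  have unique: "c = c'" if "z - sc c w \<in> Y" and "z - sc c' w \<in> Y" for z c c'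
  proof (rule ccontr)
    assume "c \<noteq> c'"
    have "sc (c' - c) w \<in> Y"
      using subspace_diff[OF subspace_Y that] by (simp add: scale_left_diff_distrib)
    then have "sc (inverse (c' - c)) (sc (c' - c) w) \<in> Y" by (rule subspace_scale[OF subspace_Y])
    then show False using \<open>c \<noteq> c'\<close> \<open>w \<notin> Y\<close> by simp
  qed
  define \<phi> where "\<phi> z = (SOME c. z - sc c w \<in> Y)" for z
  have \<phi>: "z - sc (\<phi> z) w \<in> Y" for z
  proof -
    have "z \<in> span (insert w Y)" using span_insert_eq_UNIV[OF \<open>w \<notin> Y\<close>] by simp
    then have "\<exists>c. z - sc c w \<in> Y" by (simp add: span_insert)
    then show ?thesis unfolding \<phi>_def by (rule someI_ex)
  qed
  have \<phi>_eq: "\<phi> z = c" if "z - sc c w \<in> Y" for z c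
    using unique[OF \<phi> that] .
  have "Vector_Spaces.linear sc (*) \<phi>"
  proof (unfold Vector_Spaces.linear_iff, intro conjI allI)
    show "vector_space sc" by unfold_locales
    show "vector_space ((*) :: 'k \<Rightarrow> 'k \<Rightarrow> 'k)" by (rule vector_space_over_itself.vector_space_axioms)
    show "\<phi> (a + b) = \<phi> a + \<phi> b" for a b
      using subspace_add[OF subspace_Y \<phi>[of a] \<phi>[of b]]
      by (intro \<phi>_eq) (simp add: scale_left_distrib algebra_simps)
    show "\<phi> (sc c a) = c * \<phi> a" for c a
      using subspace_scale[OF subspace_Y \<phi>[of a], of c]
      by (intro \<phi>_eq) (simp add: scale_right_diff_distrib)
  qed
  moreover have "\<phi> y = 0" if "y \<in> Y" for y using that by (intro \<phi>_eq) simp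
  ultimately show thesis using that \<phi> by blast
qed

lemma diff_projections_eq_rank_one:
  assumes "is_projection sc Y P" and "is_projection sc Y Q" and "\<And>z. z - sc (\<phi> z) w \<in> Y"
  shows "P z - Q z = sc (\<phi> z) (P w - Q w)"
proof -
  have "R z = (z - sc (\<phi> z) w) + sc (\<phi> z) (R w)" if "is_projection sc Y R" for R
  proof -
    have "R z = R (z - sc (\<phi> z) w) + R (sc (\<phi> z) w)"
      using that unfolding is_projection_def Vector_Spaces.linear_iff by (metis diff_add_cancel)
    then show ?thesis
      using that assms(3) unfolding is_projection_def Vector_Spaces.linear_iff by simp
  qed
  from this[OF assms(1)] this[OF assms(2)] show ?thesis by (simp add: scale_right_diff_distrib)
qed

lemma CM_sum_eq_for_projections:
  assumes P: "is_projection sc Y P" and Q: "is_projection sc Y Q"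
    and invariant: "CM_op sc l \<alpha> x f ` Y \<subseteq> Y"
    and f_linear: "\<And>i. i < l \<Longrightarrow> Vector_Spaces.linear sc (*) (f i)"
  shows "(\<Sum>i<l. of_real (\<alpha> i) * f i (P (x i))) = (\<Sum>i<l. of_real (\<alpha> i) * f i (Q (x i)))"
proof -
  obtain \<phi> w where "Vector_Spaces.linear sc (*) \<phi>" and \<phi>: "\<And>z. z - sc (\<phi> z) w \<in> Y"
    and \<phi>_Y: "\<And>y. y \<in> Y \<Longrightarrow> \<phi> y = 0"
    using hyperplane_coordinate by blast
  interpret \<phi>: Vector_Spaces.linear sc "(*)" \<phi> by fact
  define y0 where "y0 = P w - Q w"
  have "y0 \<in> Y"
    using P Q unfolding y0_def is_projection_def by (blast intro: subspace_diff[OF subspace_Y])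
  have diff: "f i (P (x i)) - f i (Q (x i)) = \<phi> (x i) * f i y0" if "i < l" for i
  proof -
    interpret f: Vector_Spaces.linear sc "(*)" "f i" using f_linear[OF that] .
    show ?thesis
      using diff_projections_eq_rank_one[OF P Q \<phi>, of "x i"] by (simp add: y0_def flip: f.diff f.scale)
  qed
  \<comment> \<open>This is \<open>trace (T (P - Q)) = 0\<close>, with \<open>P - Q = y0 \<otimes> \<phi>\<close> and \<open>T y0 \<in> Y \<subseteq> ker \<phi>\<close>.\<close>
  have "(\<Sum>i<l. of_real (\<alpha> i) * (\<phi> (x i) * f i y0)) = \<phi> (CM_op sc l \<alpha> x f y0)"
    unfolding CM_op_def by (simp add: \<phi>.sum \<phi>.scale mult_ac)
  also have "\<dots> = 0" using invariant \<open>y0 \<in> Y\<close> by (blast intro: \<phi>_Y)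
  finally have "(\<Sum>i<l. of_real (\<alpha> i) * (f i (P (x i)) - f i (Q (x i)))) = 0"
    by (simp add: diff)
  then show ?thesis by (simp add: right_diff_distrib sum_subtractf)
qed

lemma projections_eq_if_CM_values_eq:
  assumes P: "is_projection sc Y P" and Q: "is_projection sc Y Q"
    and f_linear: "\<And>i. i < l \<Longrightarrow> Vector_Spaces.linear sc (*) (f i)"
    and notin: "\<And>i. i < l \<Longrightarrow> x i \<notin> Y"
    and equal_values: "\<And>i. i < l \<Longrightarrow> f i (P (x i)) = f i (Q (x i))"
    and no_common_zero: "\<not> (\<exists>y\<in>Y. y \<noteq> 0 \<and> (\<forall>i<l. f i y = 0))"
  shows "P = Q"
proof
  fix z
  obtain \<phi> w where \<phi>: "\<And>z. z - sc (\<phi> z) w \<in> Y"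
    by (metis hyperplane_coordinate)
  define y0 where "y0 = P w - Q w"
  have "y0 \<in> Y"
    using P Q unfolding y0_def is_projection_def by (blast intro: subspace_diff[OF subspace_Y])
  have "f i y0 = 0" if "i < l" for i
  proof -
    interpret f: Vector_Spaces.linear sc "(*)" "f i" using f_linear[OF that] .
    have "\<phi> (x i) \<noteq> 0" using \<phi>[of "x i"] notin[OF that] by auto
    moreover have "\<phi> (x i) * f i y0 = f i (P (x i) - Q (x i))"
      using diff_projections_eq_rank_one[OF P Q \<phi>, of "x i"] by (simp add: y0_def f.scale)
    then have "\<phi> (x i) * f i y0 = 0" using equal_values[OF that] by (simp add: f.diff)
    ultimately show ?thesis by simp
  qed
  then have "y0 = 0" using no_common_zero \<open>y0 \<in> Y\<close> by blast
  then show "P z = Q z" using diff_projections_eq_rank_one[OF P Q \<phi>, of z] by (simp add: y0_def)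
qed

lemma Chalmers_Metcalf_values:
  assumes CM: "Chalmers_Metcalf sc Y l \<alpha> x f" and P: "minimal_projection sc Y P" and "i < l"
  shows "f i (P (x i)) = of_real (proj_const sc Y)"
proof -
  let ?c = "proj_const sc Y"
  obtain P0 where P0: "minimal_projection sc Y P0"
    and P0_values: "\<And>i. i < l \<Longrightarrow> f i (P0 (x i)) = of_real ?c"
    using CM unfolding Chalmers_Metcalf_def by metis
  have x_le: "norm (x i) \<le> 1" and f_ball: "f i \<in> dual_ball sc" and pos: "0 < \<alpha> i"
    if "i < l" for i
    using CM that unfolding Chalmers_Metcalf_def ext_dual_ball_def ext_ball_def extreme_point_of_def
    by auto
  have "(\<Sum>i<l. \<alpha> i) = 1" using CM unfolding Chalmers_Metcalf_def by simp
  have "(\<Sum>i<l. of_real (\<alpha> i) * f i (P (x i))) = (\<Sum>i<l. of_real (\<alpha> i) * f i (P0 (x i)))"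
    using P P0 CM f_ball unfolding minimal_projection_def Chalmers_Metcalf_def dual_ball_def
    by (intro CM_sum_eq_for_projections) auto
  also have "\<dots> = of_real (\<Sum>i<l. \<alpha> i) * of_real ?c"
    by (simp add: P0_values sum_distrib_right)
  also have "\<dots> = of_real ?c" using \<open>(\<Sum>i<l. \<alpha> i) = 1\<close> by simp
  finally have sum_eq: "(\<Sum>i<l. of_real (\<alpha> i) * f i (P (x i))) = of_real ?c" .
  have bound: "norm (f i (P (x i))) \<le> ?c" if "i < l" for i
  proof -
    have "norm (f i (P (x i))) \<le> ?c * norm (x i)"
      using norm_le_if_dual_ball[OF f_ball[OF that]] norm_le_if_minimal_projection[OF P]
      by (rule order_trans)
    also have "\<dots> \<le> ?c"
      using x_le[OF that] proj_const_nonneg[OF P] by (simp add: mult_left_le)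
    finally show ?thesis .
  qed
  show ?thesis
    by (rule convex_combination_eq_of_real_if_norm_le[OF real_or_complex finite_lessThan,
          where a = "\<lambda>i. f i (P (x i))"])
      (use pos bound sum_eq \<open>(\<Sum>i<l. \<alpha> i) = 1\<close> \<open>i < l\<close> in auto)
qed

lemma minimal_projection_unique_if_no_common_zero:
  assumes CM: "Chalmers_Metcalf sc Y l \<alpha> x f" and "proj_const sc Y > 1"
    and no_common_zero: "\<not> (\<exists>y\<in>Y. y \<noteq> 0 \<and> (\<forall>i<l. f i y = 0))"
  shows "\<exists>!P. minimal_projection sc Y P"
proof -
  obtain P0 where P0: "minimal_projection sc Y P0"
    using CM unfolding Chalmers_Metcalf_def by blast
  moreover have "P = P0" if P: "minimal_projection sc Y P" for P
    using P P0 Chalmers_Metcalf_functional_linear[OF CM]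
      Chalmers_Metcalf_point_notin[OF CM \<open>proj_const sc Y > 1\<close>]
      Chalmers_Metcalf_values[OF CM P] Chalmers_Metcalf_values[OF CM P0] no_common_zero
    unfolding minimal_projection_def by (intro projections_eq_if_CM_values_eq) auto
  ultimately show ?thesis by (rule ex1I)
qed

end

theorem mainTheorem17:
  fixes sc :: "'k::real_normed_field \<Rightarrow> 'v::real_normed_vector \<Rightarrow> 'v"
    and Y :: "'v set" and n l :: nat
    and \<alpha> :: "nat \<Rightarrow> real" and x :: "nat \<Rightarrow> 'v" and f :: "nat \<Rightarrow> 'v \<Rightarrow> 'k"
  assumes "real_or_complex_field TYPE('k)"
    and "K_normed_space sc"
    and "\<exists>B. finite B \<and> module.span sc B = UNIV"
    and "vector_space.dim sc (UNIV :: 'v set) = n"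
    and "n \<ge> 1"
    and "module.subspace sc Y"
    and "vector_space.dim sc Y = n - 1"
    and "proj_const sc Y > 1"
    and "Chalmers_Metcalf sc Y l \<alpha> x f"
  shows "(\<not> (\<exists>y\<in>Y. y \<noteq> 0 \<and> (\<forall>i<l. f i y = 0)) \<longrightarrow> (\<exists>!P. minimal_projection sc Y P))
       \<and> (bij_betw (CM_op sc l \<alpha> x f) Y Y \<longrightarrow> (\<exists>!P. minimal_projection sc Y P))"
proof -
  interpret K_normed_hyperplane sc Y
    by unfold_locales (use assms(1-7) in auto)
  show ?thesis
  proof (intro conjI impI)
    show "\<exists>!P. minimal_projection sc Y P" if "\<not> (\<exists>y\<in>Y. y \<noteq> 0 \<and> (\<forall>i<l. f i y = 0))"
      using assms(9,8) that by (rule minimal_projection_unique_if_no_common_zero)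
    show "\<exists>!P. minimal_projection sc Y P" if "bij_betw (CM_op sc l \<alpha> x f) Y Y"
      using assms(9,8) no_common_zero_if_inj_on_CM_op[OF bij_betw_imp_inj_on[OF that]
          subspace_0[OF subspace_Y] Chalmers_Metcalf_functional_linear[OF assms(9)]]
      by (rule minimal_projection_unique_if_no_common_zero)
  qed
qed

end
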